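(* Assume $\sup_{x\in[-1,1]}|F_{uv}(x)|<\frac12$ for every edge $uv\in E$. Then the Jacobian matrix $J(\mathbf{x})$ of $g$, with entries $J_{u,u}=1+\sum_{v\in N_u}\mathbf{x}_v[F_{uv}(\mathbf{x}_u-\mathbf{x}_v)+\mathbf{x}_uF'_{uv}(\mathbf{x}_u-\mathbf{x}_v)]$, $J_{u,v}=\mathbf{x}_u[F_{uv}(\mathbf{x}_u-\mathbf{x}_v)-\mathbf{x}_vF'_{uv}(\mathbf{x}_u-\mathbf{x}_v)]$ if $uv\in E$ and $J_{u,v}=0$ otherwise ($u\neq v$), is invertible at every $\mathbf{x}\in\Delta_n$. Moreover, $g$ is a local diffeomorphism in a neighborhood of $\Delta_n$.
   Context: $G=(V,E)$ is a finite undirected graph with $n$ vertices, $N_u$ the neighbourhood of $u$, $\Delta_n=\{\mathbf{x}\in\mathbb{R}^n_{\ge 0}:\sum_v\mathbf{x}_v=1\}$. For every edge $uv\in E$, $F_{uv}=F_{vu}:[-1,1]\to[-1,1]$ is continuously differentiable, $F_{uv}(0)=0$, increasing and odd. The map $g$ is given by the formula $g(\mathbf{x})_u=\mathbf{x}_u+\sum_{v\in N_u}\mathbf{x}_u\mathbf{x}_vF_{uv}(\mathbf{x}_u-\mathbf{x}_v)$, regarded as a map on a neighbourhood of $\Delta_n$ in $\mathbb{R}^n$. *)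

theory Defs
  imports "HOL-Analysis.Analysis"
begin

text \<open>Vertices are the elements of a finite type 'n; the graph is given by a symmetric,
irreflexive edge relation E. Points of R^n are vectors real^'n.\<close>

definition std_simplex :: "(real^'n::finite) set" where
  "std_simplex = {x. (\<forall>v. x$v \<ge> 0) \<and> (\<Sum>v\<in>UNIV. x$v) = 1}"

definition nbhd :: "('n \<Rightarrow> 'n \<Rightarrow> bool) \<Rightarrow> 'n \<Rightarrow> 'n set" where
  "nbhd E u = {v. E u v}"

definition gmap :: "('n::finite \<Rightarrow> 'n \<Rightarrow> bool) \<Rightarrow> ('n \<Rightarrow> 'n \<Rightarrow> real \<Rightarrow> real)
     \<Rightarrow> real^'n \<Rightarrow> real^'n" where
  "gmap E F x = (\<chi> u. x$u + (\<Sum>v\<in>nbhd E u. x$u * x$v * F u v (x$u - x$v)))"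

definition jac :: "('n::finite \<Rightarrow> 'n \<Rightarrow> bool) \<Rightarrow> ('n \<Rightarrow> 'n \<Rightarrow> real \<Rightarrow> real)
     \<Rightarrow> ('n \<Rightarrow> 'n \<Rightarrow> real \<Rightarrow> real) \<Rightarrow> real^'n \<Rightarrow> real^'n^'n" where
  "jac E F F' x = (\<chi> u w.
     if u = w then 1 + (\<Sum>v\<in>nbhd E u. x$v * (F u v (x$u - x$v) + x$u * F' u v (x$u - x$v)))
     else if E u w then x$u * (F u w (x$u - x$w) - x$w * F' u w (x$u - x$w))
     else 0)"

definition C1_on :: "(real^'n::finite \<Rightarrow> real^'n) \<Rightarrow> (real^'n) set \<Rightarrow> bool" where
  "C1_on f S \<longleftrightarrow> (\<exists>D. (\<forall>y\<in>S. (f has_derivative blinfun_apply (D y)) (at y)) \<and> continuous_on S D)"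

definition local_diffeo_on :: "(real^'n::finite \<Rightarrow> real^'n) \<Rightarrow> (real^'n) set \<Rightarrow> bool" where
  "local_diffeo_on f U \<longleftrightarrow> open U \<and>
     (\<forall>x\<in>U. \<exists>V W h. open V \<and> x \<in> V \<and> V \<subseteq> U \<and> open W \<and> f ` V = W \<and>
        (\<forall>y\<in>V. h (f y) = y) \<and> (\<forall>z\<in>W. f (h z) = z) \<and> C1_on f V \<and> C1_on h W)"

end

theory Submission
  imports Defs
begin

text \<open>On the simplex the Jacobian is strictly diagonally dominant by columns. In column w the
  derivative terms x_u x_w F'(x_u - x_w) are nonnegative because F is increasing, and, F' being
  even, the same term enters the diagonal entry with a plus sign and the off-diagonal entry with a
  minus sign, so it cancels in the dominance estimate. What is left is bounded by
  \<Sum>_u x_u (|F_wu| + |F_uw|) < \<Sum>_u x_u \<le> 1, using |F| < 1/2. A diagonally dominant matrix is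
  invertible, and since the Jacobian is continuous, det J \<noteq> 0 on an open neighbourhood of the
  simplex, where the inverse function theorem makes g a local diffeomorphism.\<close>

lemma row_diag_dominant_imp_invertible:
  fixes A :: "real^'n::finite^'n"
  assumes dominant: "\<And>i. (\<Sum>j\<in>UNIV-{i}. \<bar>A$i$j\<bar>) < \<bar>A$i$i\<bar>"
  shows "invertible A"
proof -
  have "z = 0" if Az: "A *v z = 0" for z :: "real^'n"
  proof -
    obtain k where k: "\<And>j. \<bar>z$j\<bar> \<le> \<bar>z$k\<bar>"
      using ex_is_arg_min_if_finite[of UNIV "\<lambda>j. - \<bar>z$j\<bar>"] by (auto simp: is_arg_min_def not_less)
    let ?S = "\<Sum>j\<in>UNIV-{k}. \<bar>A$k$j\<bar>"
    have "(\<Sum>j\<in>UNIV. A$k$j * z$j) = 0"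
      using Az by (simp add: vec_eq_iff matrix_vector_mult_def)
    then have "A$k$k * z$k = - (\<Sum>j\<in>UNIV-{k}. A$k$j * z$j)"
      by (simp add: sum.remove[of UNIV k] eq_neg_iff_add_eq_0)
    then have "\<bar>A$k$k * z$k\<bar> = \<bar>\<Sum>j\<in>UNIV-{k}. A$k$j * z$j\<bar>"
      by simp
    also have "\<dots> \<le> (\<Sum>j\<in>UNIV-{k}. \<bar>A$k$j\<bar> * \<bar>z$k\<bar>)"
      by (rule order_trans[OF sum_abs]) (auto simp: abs_mult intro!: sum_mono mult_left_mono k)
    finally have "(\<bar>A$k$k\<bar> - ?S) * \<bar>z$k\<bar> \<le> 0"
      by (simp add: abs_mult sum_distrib_right left_diff_distrib)
    moreover have "\<bar>A$k$k\<bar> - ?S > 0"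
      using dominant[of k] by simp
    ultimately have "\<bar>z$k\<bar> = 0"
      by (simp add: mult_le_0_iff)
    then have "z$j = 0" for j
      using k[of j] by simp
    then show "z = 0"
      by (simp add: vec_eq_iff)
  qed
  then obtain B where "B ** A = mat 1"
    using matrix_left_invertible_ker by blast
  then show ?thesis
    using matrix_left_right_inverse invertible_def by blast
qed

lemma column_diag_dominant_imp_invertible:
  fixes A :: "real^'n::finite^'n"
  assumes "\<And>j. (\<Sum>i\<in>UNIV-{j}. \<bar>A$i$j\<bar>) < \<bar>A$j$j\<bar>"
  shows "invertible A"
proof -
  have "invertible (transpose A)"
    by (rule row_diag_dominant_imp_invertible) (simp add: transpose_def assms)
  then show ?thesis
    by (metis transpose_invertible transpose_transpose)
qed

lemma continuous_on_det:
  fixes M :: "'a::topological_space \<Rightarrow> real^'n::finite^'n"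
  assumes "\<And>i j. continuous_on S (\<lambda>z. M z $ i $ j)"
  shows "continuous_on S (\<lambda>z. det (M z))"
  unfolding det_def
  by (intro continuous_on_sum continuous_on_mult continuous_on_const continuous_on_prod assms)

text \<open>Cramer's rule, so that the inverse is visibly continuous in the entries where det \<noteq> 0.\<close>
definition cramer_inverse :: "real^'n::finite^'n \<Rightarrow> real^'n^'n" where
  "cramer_inverse A = (\<chi> k j. det (\<chi> a b. if b = k then axis j 1 $ a else A$a$b) / det A)"

lemma matrix_mul_cramer_inverse:
  fixes A :: "real^'n::finite^'n"
  assumes "det A \<noteq> 0"
  shows "A ** cramer_inverse A = mat 1" and "cramer_inverse A ** A = mat 1"
proof -
  have "A *v (\<chi> k. cramer_inverse A $ k $ j) = axis j 1" for j
    using cramer[OF assms, of _ "axis j 1"] by (simp add: cramer_inverse_def)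
  then show right: "A ** cramer_inverse A = mat 1"
    by (simp add: vec_eq_iff matrix_matrix_mult_def matrix_vector_mult_def mat_def axis_def)
  then show "cramer_inverse A ** A = mat 1"
    using matrix_left_right_inverse by blast
qed

lemma inv_matrix_vector_mult:
  fixes A :: "real^'n::finite^'n"
  assumes "det A \<noteq> 0"
  shows "inv (\<lambda>h. A *v h) = (\<lambda>h. cramer_inverse A *v h)"
  by (rule inv_unique_comp)
     (auto simp: o_def matrix_vector_mul_assoc matrix_mul_cramer_inverse[OF assms])

lemma continuous_on_cramer_inverse:
  fixes M :: "'a::topological_space \<Rightarrow> real^'n::finite^'n"
  assumes cont: "\<And>i j. continuous_on S (\<lambda>z. M z $ i $ j)"
    and nonsingular: "\<And>z. z \<in> S \<Longrightarrow> det (M z) \<noteq> 0"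
  shows "continuous_on S (\<lambda>z. cramer_inverse (M z) $ k $ j)"
proof -
  have "continuous_on S (\<lambda>z. det (\<chi> a b. if b = k then axis j 1 $ a else M z $ a $ b))"
  proof (rule continuous_on_det)
    fix a b
    show "continuous_on S (\<lambda>z. (\<chi> a b. if b = k then axis j 1 $ a else M z $ a $ b) $ a $ b)"
      by (cases "b = k") (simp_all add: cont)
  qed
  moreover have "continuous_on S (\<lambda>z. det (M z))"
    by (rule continuous_on_det[OF cont])
  ultimately show ?thesis
    unfolding cramer_inverse_def using nonsingular by (auto intro!: continuous_on_divide)
qed

lemma blinfun_apply_Blinfun_matrix:
  "blinfun_apply (Blinfun (\<lambda>h. (A::real^'n::finite^'n) *v h)) = (\<lambda>h. A *v h)"
  using bounded_linear_Blinfun_apply[OF matrix_vector_mul_bounded_linear[of A]] by simp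

lemma continuous_on_Blinfun_matrix:
  fixes M :: "'a::t2_space \<Rightarrow> real^'n::finite^'n"
  assumes "\<And>i j. continuous_on S (\<lambda>x. M x $ i $ j)"
  shows "continuous_on S (\<lambda>x. Blinfun (\<lambda>h. M x *v h))"
proof (rule continuous_on_blinfun_componentwise)
  fix i :: "real^'n"
  show "continuous_on S (\<lambda>x. blinfun_apply (Blinfun (\<lambda>h. M x *v h)) i)"
    unfolding blinfun_apply_Blinfun_matrix unfolding matrix_vector_mult_def
    by (intro continuous_on_vec_lambda continuous_on_sum continuous_on_mult continuous_on_const assms)
qed

lemma C1_on_matrix_derivative:
  fixes f :: "real^'n::finite \<Rightarrow> real^'n" and M :: "real^'n \<Rightarrow> real^'n^'n"
  assumes "\<And>y. y \<in> S \<Longrightarrow> (f has_derivative (\<lambda>h. M y *v h)) (at y)"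
    and "\<And>i j. continuous_on S (\<lambda>y. M y $ i $ j)"
  shows "C1_on f S"
  unfolding C1_on_def
  using assms continuous_on_Blinfun_matrix[of S M]
  by (auto simp: blinfun_apply_Blinfun_matrix intro!: exI[of _ "\<lambda>y. Blinfun (\<lambda>h. M y *v h)"])

lemma local_diffeo_on_nonsingular_jacobian:
  fixes f :: "real^'n::finite \<Rightarrow> real^'n" and J :: "real^'n \<Rightarrow> real^'n^'n"
  assumes deriv: "\<And>x. (f has_derivative (\<lambda>h. J x *v h)) (at x)"
    and cont: "\<And>i j. continuous_on UNIV (\<lambda>x. J x $ i $ j)"
  shows "local_diffeo_on f {x. det (J x) \<noteq> 0}"
  unfolding local_diffeo_on_def
proof (intro conjI ballI)
  let ?U = "{x. det (J x) \<noteq> 0}"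
  define D where "D x = Blinfun (\<lambda>h. J x *v h)" for x
  have D_deriv: "(f has_derivative blinfun_apply (D x)) (at x)" for x
    unfolding D_def blinfun_apply_Blinfun_matrix by (rule deriv)
  have D_cont: "continuous_on ?U D"
    unfolding D_def by (rule continuous_on_Blinfun_matrix) (rule continuous_on_subset[OF cont], simp)
  show U_open: "open ?U"
    by (rule open_Collect_neq[OF continuous_on_det[OF cont] continuous_on_const])
  fix x0 assume x0: "x0 \<in> ?U"
  have "Blinfun (\<lambda>h. cramer_inverse (J x0) *v h) o\<^sub>L D x0 = id_blinfun"
    using x0 by (intro blinfun_eqI)
      (simp add: D_def blinfun_apply_Blinfun_matrix matrix_vector_mul_assoc matrix_mul_cramer_inverse)
  then obtain V W h h' where V: "open V" "V \<subseteq> ?U" "x0 \<in> V" and W: "open W"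
    and hom: "homeomorphism V W f h"
    and h_deriv: "\<And>z. z \<in> W \<Longrightarrow> (h has_derivative h' z) (at z)"
    and h': "\<And>z. z \<in> W \<Longrightarrow> h' z = inv (blinfun_apply (D (h z)))"
    using inverse_function_theorem[OF U_open D_deriv D_cont x0] by metis
  have hW: "h z \<in> ?U" if "z \<in> W" for z
    using hom V(2) that unfolding homeomorphism_def by blast
  have h_cont: "continuous_on W h"
    using hom unfolding homeomorphism_def by blast
  have "C1_on h W"
  proof (rule C1_on_matrix_derivative)
    fix z assume z: "z \<in> W"
    show "(h has_derivative (\<lambda>v. cramer_inverse (J (h z)) *v v)) (at z)"
      using h_deriv[OF z] h'[OF z] hW[OF z] by (simp add: D_def blinfun_apply_Blinfun_matrix inv_matrix_vector_mult)
  next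
    fix k j
    show "continuous_on W (\<lambda>z. cramer_inverse (J (h z)) $ k $ j)"
      using hW by (intro continuous_on_cramer_inverse continuous_on_compose2[OF cont h_cont]) auto
  qed
  moreover have "C1_on f V"
    by (rule C1_on_matrix_derivative[OF deriv continuous_on_subset[OF cont]]) auto
  ultimately show "\<exists>V W h. open V \<and> x0 \<in> V \<and> V \<subseteq> ?U \<and> open W \<and> f ` V = W \<and>
      (\<forall>y\<in>V. h (f y) = y) \<and> (\<forall>z\<in>W. f (h z) = z) \<and> C1_on f V \<and> C1_on h W"
    using V W hom unfolding homeomorphism_def by blast
qed

lemma has_derivative_vec_nth [derivative_intros]:
  "((\<lambda>x::'a::real_normed_vector^'n::finite. x $ u) has_derivative (\<lambda>h. h $ u)) F"
  by (rule bounded_linear_imp_has_derivative[OF bounded_linear_vec_nth])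

lemma has_derivative_comp_coord_diff:
  assumes "\<And>t. (f has_real_derivative f' t) (at t)"
  shows "((\<lambda>x::real^'n::finite. f (x$u - x$v)) has_derivative
           (\<lambda>h. f' (x$u - x$v) * (h$u - h$v))) (at x)"
proof -
  have "((\<lambda>x::real^'n. x$u - x$v) has_derivative (\<lambda>h. h$u - h$v)) (at x)"
    by (intro derivative_eq_intros) auto
  moreover have "(f has_derivative (*) (f' (x$u - x$v))) (at (x$u - x$v))"
    using assms by (simp add: has_field_derivative_def)
  ultimately show ?thesis
    using diff_chain_at by (fastforce simp: o_def)
qed

lemma jac_mult_vec_nth:
  fixes E :: "'n::finite \<Rightarrow> 'n \<Rightarrow> bool" and x h :: "real^'n"
  assumes E_irrefl: "\<And>u. \<not> E u u"
  shows "(jac E F F' x *v h) $ u = h$u + (\<Sum>v\<in>nbhd E u.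
           (h$u * x$v + x$u * h$v) * F u v (x$u - x$v) + x$u * x$v * (F' u v (x$u - x$v) * (h$u - h$v)))"
proof -
  let ?J = "jac E F F' x" and ?d = "\<lambda>v. x$u - x$v"
  have uN: "u \<notin> nbhd E u"
    using E_irrefl by (simp add: nbhd_def)
  have "(?J *v h) $ u = ?J$u$u * h$u + (\<Sum>w\<in>UNIV-{u}. ?J$u$w * h$w)"
    by (simp add: matrix_vector_mult_def sum.remove)
  also have "(\<Sum>w\<in>UNIV-{u}. ?J$u$w * h$w) = (\<Sum>w\<in>nbhd E u. ?J$u$w * h$w)"
    using uN by (intro sum.mono_neutral_right) (auto simp: jac_def nbhd_def)
  also have "\<dots> = (\<Sum>w\<in>nbhd E u. x$u * (F u w (?d w) - x$w * F' u w (?d w)) * h$w)"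
    using uN by (intro sum.cong) (auto simp: jac_def nbhd_def)
  also have "?J$u$u * h$u = h$u + (\<Sum>v\<in>nbhd E u. x$v * (F u v (?d v) + x$u * F' u v (?d v)) * h$u)"
    by (simp add: jac_def sum_distrib_right distrib_right)
  finally show ?thesis
    by (simp add: add.assoc sum.distrib[symmetric] algebra_simps)
qed

lemma has_derivative_gmap:
  fixes E :: "'n::finite \<Rightarrow> 'n \<Rightarrow> bool" and x :: "real^'n"
  assumes E_irrefl: "\<And>u. \<not> E u u"
    and F_deriv: "\<And>u v t. E u v \<Longrightarrow> (F u v has_real_derivative F' u v t) (at t)"
  shows "(gmap E F has_derivative (\<lambda>h. jac E F F' x *v h)) (at x)"
proof (rule has_derivative_componentwise_within[THEN iffD2], intro ballI)
  fix i :: "real^'n" assume "i \<in> Basis"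
  then obtain u where i: "i = axis u 1"
    by (auto simp: Basis_vec_def)
  have "((\<lambda>y. y$u * y$v * F u v (y$u - y$v)) has_derivative
          (\<lambda>h. (h$u * x$v + x$u * h$v) * F u v (x$u - x$v)
                + x$u * x$v * (F' u v (x$u - x$v) * (h$u - h$v)))) (at x)"
    if "v \<in> nbhd E u" for v
    using has_derivative_comp_coord_diff[of "F u v" "F' u v" u v x] F_deriv that
    by (auto simp: nbhd_def algebra_simps intro!: derivative_eq_intros)
  then have "((\<lambda>y. gmap E F y $ u) has_derivative (\<lambda>h. (jac E F F' x *v h) $ u)) (at x)"
    unfolding gmap_def jac_mult_vec_nth[OF E_irrefl]
    by (auto intro!: has_derivative_add has_derivative_sum has_derivative_vec_nth)
  then show "((\<lambda>y. gmap E F y \<bullet> i) has_derivative (\<lambda>h. (jac E F F' x *v h) \<bullet> i)) (at x)"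
    by (simp add: i inner_axis)
qed

lemma continuous_on_jac:
  fixes E :: "'n::finite \<Rightarrow> 'n \<Rightarrow> bool" and S :: "(real^'n) set"
  assumes F_deriv: "\<And>u v t. E u v \<Longrightarrow> (F u v has_real_derivative F' u v t) (at t)"
    and F'_cont: "\<And>u v. E u v \<Longrightarrow> continuous_on UNIV (F' u v)"
  shows "continuous_on S (\<lambda>x. jac E F F' x $ i $ j)"
proof -
  have F_cont: "continuous_on UNIV (F u v)" if "E u v" for u v
    using F_deriv[OF that] by (meson DERIV_isCont continuous_at_imp_continuous_on)
  have comp: "continuous_on S (\<lambda>x::real^'n. G (x$a - x$b))" if "continuous_on UNIV G" for G a b
    by (rule continuous_on_compose2[OF that]) (auto intro!: continuous_intros)
  show ?thesis
    by (cases "i = j"; cases "E i j")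
       (auto simp: jac_def nbhd_def intro!: continuous_intros comp F_cont F'_cont)
qed

lemma std_simplex_sum_le_1:
  assumes "x \<in> std_simplex"
  shows "(\<Sum>u\<in>A. x$u) \<le> 1"
proof -
  have "(\<Sum>u\<in>A. x$u) \<le> (\<Sum>u\<in>UNIV. x$u)"
    using assms by (intro sum_mono2) (auto simp: std_simplex_def)
  then show ?thesis
    using assms by (simp add: std_simplex_def)
qed

lemma std_simplex_coord_diff:
  assumes x: "x \<in> std_simplex"
  shows "x$u - x$w \<in> {-1..1}"
    and "u \<noteq> w \<Longrightarrow> 0 < x$u \<Longrightarrow> 0 < x$w \<Longrightarrow> x$u - x$w \<in> {-1<..<1}"
proof -
  have nonneg: "0 \<le> x$v" for v
    using x by (simp add: std_simplex_def)
  have le_1: "x$v \<le> 1" for v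
    using std_simplex_sum_le_1[OF x, of "{v}"] by simp
  show "x$u - x$w \<in> {-1..1}"
    using nonneg[of u] nonneg[of w] le_1[of u] le_1[of w] by auto
  assume "u \<noteq> w" "0 < x$u" "0 < x$w"
  moreover have "x$u + x$w \<le> 1"
    using std_simplex_sum_le_1[OF x, of "{u, w}"] \<open>u \<noteq> w\<close> by simp
  ultimately show "x$u - x$w \<in> {-1<..<1}"
    by auto
qed

lemma mono_on_deriv_nonneg:
  assumes deriv: "(f has_real_derivative f') (at t)"
    and mono: "mono_on {a..b} f" and t: "t \<in> {a<..<b}"
  shows "0 \<le> f'"
proof (rule ccontr)
  assume "\<not> 0 \<le> f'"
  then obtain d where "d > 0" and dec: "\<And>h. 0 < h \<Longrightarrow> h < d \<Longrightarrow> f (t + h) < f t"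
    using DERIV_neg_dec_right[OF deriv] by force
  define h where "h = min (d/2) ((b - t)/2)"
  have h: "0 < h" "h < d" "t + h \<le> b"
    using t \<open>d > 0\<close> unfolding h_def by (auto simp: min_def field_simps)
  then have "f t \<le> f (t + h)"
    using t by (intro mono_onD[OF mono]) auto
  with dec h show False
    by force
qed

lemma odd_on_deriv_even:
  assumes deriv_t: "(f has_real_derivative a) (at t)" and deriv_neg_t: "(f has_real_derivative b) (at (-t))"
    and odd: "\<And>s. s \<in> {-r..r} \<Longrightarrow> f (-s) = - f s" and t: "t \<in> {-r<..<r}"
  shows "a = b"
proof -
  have "((\<lambda>s. f (- s)) has_real_derivative b * -1) (at t)"
    by (rule DERIV_chain2[where f=f and g=uminus, OF deriv_neg_t]) (auto intro!: derivative_eq_intros)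
  then have "((\<lambda>s. - f (- s)) has_real_derivative b) (at t)"
    using DERIV_minus by fastforce
  then have "(f has_real_derivative b) (at t)"
    by (rule has_field_derivative_transform_within_open[where S="{-r<..<r}"]) (use t odd in auto)
  then show ?thesis
    using deriv_t DERIV_unique by blast
qed

lemma sum_mult_lt_1:
  fixes x c :: "'a \<Rightarrow> real"
  assumes "finite N" and nonneg: "\<And>u. u \<in> N \<Longrightarrow> 0 \<le> x u" and "sum x N \<le> 1"
    and c: "\<And>u. u \<in> N \<Longrightarrow> c u < 1"
  shows "(\<Sum>u\<in>N. x u * c u) < 1"
proof (cases "\<exists>u\<in>N. 0 < x u")
  case True
  have "(\<Sum>u\<in>N. x u * c u) < sum x N"
  proof (rule sum_strict_mono_ex1[OF \<open>finite N\<close>])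
    show "\<forall>u\<in>N. x u * c u \<le> x u"
      using c nonneg by (metis less_eq_real_def mult.right_neutral mult_left_mono)
    show "\<exists>u\<in>N. x u * c u < x u"
      using True c by (metis mult.right_neutral mult_strict_left_mono)
  qed
  with \<open>sum x N \<le> 1\<close> show ?thesis
    by linarith
next
  case False
  then have "\<forall>u\<in>N. x u = 0"
    using nonneg by (meson not_le order_antisym)
  then show ?thesis
    by simp
qed

locale graph_interaction =
  fixes E :: "'n::finite \<Rightarrow> 'n \<Rightarrow> bool" and F F' :: "'n \<Rightarrow> 'n \<Rightarrow> real \<Rightarrow> real"
  assumes E_sym: "\<And>u v. E u v \<Longrightarrow> E v u"
    and E_irrefl: "\<And>u. \<not> E u u"
    and F_sym: "\<And>u v. E u v \<Longrightarrow> F u v = F v u"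
    and F_deriv: "\<And>u v t. E u v \<Longrightarrow> (F u v has_real_derivative F' u v t) (at t)"
    and F_range: "\<And>u v t. E u v \<Longrightarrow> t \<in> {-1..1} \<Longrightarrow> F u v t \<in> {-1..1}"
    and F_incr: "\<And>u v. E u v \<Longrightarrow> mono_on {-1..1} (F u v)"
    and F_odd: "\<And>u v t. E u v \<Longrightarrow> t \<in> {-1..1} \<Longrightarrow> F u v (-t) = - F u v t"
begin

lemma cross_term_sym_nonneg:
  assumes x: "x \<in> std_simplex" and Ewu: "E w u"
  shows "x$u * x$w * F' u w (x$u - x$w) = x$w * x$u * F' w u (x$w - x$u)"
    and "0 \<le> x$w * x$u * F' w u (x$w - x$u)"
proof -
  have "x$u * x$w * F' u w (x$u - x$w) = x$w * x$u * F' w u (x$w - x$u) \<and>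
        0 \<le> x$w * x$u * F' w u (x$w - x$u)"
  proof (cases "0 < x$u \<and> 0 < x$w")
    case True
    let ?t = "x$w - x$u"
    have "w \<noteq> u"
      using Ewu E_irrefl by blast
    then have t: "?t \<in> {-1<..<1}"
      using std_simplex_coord_diff(2)[OF x] True by blast
    have "(F w u has_real_derivative F' u w (- ?t)) (at (- ?t))"
      using F_deriv[OF E_sym[OF Ewu]] F_sym[OF Ewu] by simp
    then have "F' w u ?t = F' u w (x$u - x$w)"
      using odd_on_deriv_even[OF F_deriv[OF Ewu] _ F_odd[OF Ewu] t] by simp
    moreover have "0 \<le> F' w u ?t"
      by (rule mono_on_deriv_nonneg[OF F_deriv[OF Ewu] F_incr[OF Ewu] t])
    ultimately show ?thesis
      using True by simp
  next
    case False
    moreover have "0 \<le> x$u" "0 \<le> x$w"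
      using x by (auto simp: std_simplex_def)
    ultimately have "x$u = 0 \<or> x$w = 0"
      by linarith
    then show ?thesis
      by auto
  qed
  then show "x$u * x$w * F' u w (x$u - x$w) = x$w * x$u * F' w u (x$w - x$u)"
    and "0 \<le> x$w * x$u * F' w u (x$w - x$u)"
    by auto
qed

lemma jac_column_diag_dominant:
  assumes F_small: "\<And>u v. E u v \<Longrightarrow> (SUP t\<in>{-1..1}. \<bar>F u v t\<bar>) < 1/2"
    and x: "x \<in> std_simplex"
  shows "(\<Sum>u\<in>UNIV-{w}. \<bar>jac E F F' x $ u $ w\<bar>) < \<bar>jac E F F' x $ w $ w\<bar>"
proof -
  let ?J = "jac E F F' x" and ?N = "nbhd E w"
  define a where "a u = x$w * x$u * F' w u (x$w - x$u)" for u
  define c where "c u = \<bar>F w u (x$w - x$u)\<bar> + \<bar>F u w (x$u - x$w)\<bar>" for u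
  have nonneg: "0 \<le> x$v" for v
    using x by (simp add: std_simplex_def)
  have cross: "x$u * x$w * F' u w (x$u - x$w) = a u" "0 \<le> a u" if "u \<in> ?N" for u
    using cross_term_sym_nonneg[OF x] that by (auto simp: a_def nbhd_def)
  have F_half: "\<bar>F u v t\<bar> < 1/2" if "E u v" "t \<in> {-1..1}" for u v t
  proof -
    have "bdd_above ((\<lambda>t. \<bar>F u v t\<bar>) ` {-1..1})"
      using F_range[OF that(1)] by (intro bdd_aboveI[of _ 1]) force
    then have "\<bar>F u v t\<bar> \<le> (SUP t\<in>{-1..1}. \<bar>F u v t\<bar>)"
      using that(2) by (rule cSUP_upper2) auto
    then show ?thesis
      using F_small[OF that(1)] by linarith
  qed
  have "(\<Sum>u\<in>UNIV-{w}. \<bar>?J$u$w\<bar>) = (\<Sum>u\<in>?N. \<bar>x$u * F u w (x$u - x$w) - a u\<bar>)"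
    using E_irrefl cross(1)
    by (intro sum.mono_neutral_cong_right) (auto simp: jac_def nbhd_def algebra_simps dest: E_sym)
  also have "\<dots> \<le> (\<Sum>u\<in>?N. x$u * \<bar>F u w (x$u - x$w)\<bar> + a u)"
    using cross(2) nonneg by (intro sum_mono order_trans[OF abs_triangle_ineq4]) (simp add: abs_mult)
  also have "\<dots> \<le> (\<Sum>u\<in>?N. x$u * c u) + (\<Sum>u\<in>?N. x$u * F w u (x$w - x$u) + a u)"
  proof -
    have "0 \<le> x$u * (F w u (x$w - x$u) + \<bar>F w u (x$w - x$u)\<bar>)" for u
      using nonneg abs_ge_minus_self[of "F w u (x$w - x$u)"] by simp
    then show ?thesis
      unfolding sum.distrib[symmetric] c_def by (intro sum_mono) (simp add: algebra_simps)
  qed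
  also have "\<dots> < 1 + (\<Sum>u\<in>?N. x$u * F w u (x$w - x$u) + a u)"
  proof -
    have "c u < 1" if "u \<in> ?N" for u
    proof -
      have "E w u" "E u w"
        using that E_sym by (auto simp: nbhd_def)
      then show ?thesis
        using F_half[of w u "x$w - x$u"] F_half[of u w "x$u - x$w"]
          std_simplex_coord_diff(1)[OF x, of w u] std_simplex_coord_diff(1)[OF x, of u w]
        by (simp add: c_def)
    qed
    then have "(\<Sum>u\<in>?N. x$u * c u) < 1"
      using nonneg std_simplex_sum_le_1[OF x] by (intro sum_mult_lt_1) auto
    then show ?thesis
      by simp
  qed
  also have "\<dots> = ?J$w$w"
    by (simp add: jac_def a_def algebra_simps)
  finally show ?thesis
    by linarith
qed

end

theorem mainTheorem6:
  fixes E :: "'n::finite \<Rightarrow> 'n \<Rightarrow> bool"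
    and F F' :: "'n \<Rightarrow> 'n \<Rightarrow> real \<Rightarrow> real"
  assumes E_sym: "\<And>u v. E u v \<Longrightarrow> E v u"
    and E_irrefl: "\<And>u. \<not> E u u"
    and F_sym: "\<And>u v. E u v \<Longrightarrow> F u v = F v u"
    and F_deriv: "\<And>u v t. E u v \<Longrightarrow> (F u v has_real_derivative F' u v t) (at t)"
    and F'_cont: "\<And>u v. E u v \<Longrightarrow> continuous_on UNIV (F' u v)"
    and F_range: "\<And>u v t. E u v \<Longrightarrow> t \<in> {-1..1} \<Longrightarrow> F u v t \<in> {-1..1}"
    and F_zero: "\<And>u v. E u v \<Longrightarrow> F u v 0 = 0"
    and F_incr: "\<And>u v. E u v \<Longrightarrow> mono_on {-1..1} (F u v)"
    and F_odd: "\<And>u v t. E u v \<Longrightarrow> t \<in> {-1..1} \<Longrightarrow> F u v (-t) = - F u v t"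
    and F_small: "\<And>u v. E u v \<Longrightarrow> (SUP t\<in>{-1..1}. \<bar>F u v t\<bar>) < 1/2"
  shows "(\<forall>x\<in>std_simplex. invertible (jac E F F' x)) \<and>
         (\<exists>U. open U \<and> std_simplex \<subseteq> U \<and> local_diffeo_on (gmap E F) U)"
proof
  interpret graph_interaction E F F'
    by unfold_locales (fact E_sym E_irrefl F_sym F_deriv F_range F_incr F_odd)+
  show invertible: "\<forall>x\<in>std_simplex. invertible (jac E F F' x)"
    using jac_column_diag_dominant[OF F_small] column_diag_dominant_imp_invertible by blast
  let ?U = "{x. det (jac E F F' x) \<noteq> 0}"
  have "local_diffeo_on (gmap E F) ?U"
    using has_derivative_gmap[OF E_irrefl F_deriv] continuous_on_jac[OF F_deriv F'_cont]
    by (rule local_diffeo_on_nonsingular_jacobian)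
  moreover have "std_simplex \<subseteq> ?U"
    using invertible by (auto simp: invertible_det_nz)
  ultimately show "\<exists>U. open U \<and> std_simplex \<subseteq> U \<and> local_diffeo_on (gmap E F) U"
    unfolding local_diffeo_on_def by blast
qed

end
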